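(* Consider the APAPC iterates with arbitrary parameters $\eta,\theta>0$, $\tau\in(0,1]$ and $0<\alpha\le\mu$. Then for every $k\ge0$, \[ -\frac{1}{2\eta}\|x^{k+1}-x^k\|^2 \le -\frac\eta4\|y^{k+1}-y^*\|^2 + \eta\alpha^2\|x^{k+1}-x^*\|^2 + 2\eta L\,\mathrm{D}_F(x_g^k,x^* ). \]
   Context: $F:\mathbb{R}^{nd}\to\mathbb{R}$ is differentiable, $\mu$-strongly convex and $L$-smooth, $0<\mu\le L$. $\mathbf{W}$ is a symmetric positive semidefinite $nd\times nd$ matrix whose kernel is the consensus space $\{(x_1,\dots,x_n)\in(\mathbb{R}^d)^n:x_1=\dots=x_n\}$. $x^*$ is the unique minimizer of $F$ over $\ker(\mathbf{W})$ and $y^*:=-\nabla F(x^* )\in\mathrm{range}(\mathbf{W})$. $\mathrm{D}_F(u,v):=F(u)-F(v)-\langle\nabla F(v),u-v\rangle$. APAPC: given $x^0\in\mathbb{R}^{nd}$, $y^0\in\mathrm{range}(\mathbf{W})$, parameters $\eta,\theta,\alpha>0$, $\tau\in(0,1]$, set $x_f^0=x^0$ and for $k\ge0$: $x_g^k=\tau x^k+(1-\tau)x_f^k$; $x^{k+1/2}=(1+\eta\alpha)^{-1}(x^k-\eta(\nabla F(x_g^k)-\alpha x_g^k+y^k))$; $y^{k+1}=y^k+\theta\mathbf{W}x^{k+1/2}$; $x^{k+1}=(1+\eta\alpha)^{-1}(x^k-\eta(\nabla F(x_g^k)-\alpha x_g^k+y^{k+1}))$; $x_f^{k+1}=x_g^k+\frac{2\tau}{2-\tau}(x^{k+1}-x^k)$.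 *)

theory Defs
  imports "HOL-Analysis.Analysis"
begin

text \<open>Vectors of R^{nd} are modelled as elements of real^'d^'n, i.e. n blocks of size d.\<close>

definition consensus :: "(real^'d^'n) set" where
  "consensus = {x. \<forall>i j. x $ i = x $ j}"

definition strongly_convex :: "real \<Rightarrow> ('a::real_inner \<Rightarrow> real) \<Rightarrow> bool" where
  "strongly_convex \<mu> F \<longleftrightarrow> convex_on UNIV (\<lambda>x. F x - \<mu> / 2 * (norm x)^2)"

definition smooth :: "real \<Rightarrow> ('a::real_normed_vector \<Rightarrow> 'a) \<Rightarrow> bool" where
  "smooth L G \<longleftrightarrow> (\<forall>x y. norm (G x - G y) \<le> L * norm (x - y))"

definition bregman :: "('a::real_inner \<Rightarrow> real) \<Rightarrow> ('a \<Rightarrow> 'a) \<Rightarrow> 'a \<Rightarrow> 'a \<Rightarrow> real" where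
  "bregman F G u v = F u - F v - G v \<bullet> (u - v)"

definition apapc_step ::
  "('a::real_vector \<Rightarrow> 'a) \<Rightarrow> ('a \<Rightarrow> 'a) \<Rightarrow> real \<Rightarrow> real \<Rightarrow> real \<Rightarrow> real \<Rightarrow> 'a \<times> 'a \<times> 'a \<Rightarrow> 'a \<times> 'a \<times> 'a" where
  "apapc_step G W \<eta> \<theta> \<alpha> \<tau> s =
     (let x = fst s; xf = fst (snd s); y = snd (snd s);
          xg = \<tau> *\<^sub>R x + (1 - \<tau>) *\<^sub>R xf;
          xh = inverse (1 + \<eta> * \<alpha>) *\<^sub>R (x - \<eta> *\<^sub>R (G xg - \<alpha> *\<^sub>R xg + y));
          y' = y + \<theta> *\<^sub>R W xh;
          x' = inverse (1 + \<eta> * \<alpha>) *\<^sub>R (x - \<eta> *\<^sub>R (G xg - \<alpha> *\<^sub>R xg + y'));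
          xf' = xg + (2 * \<tau> / (2 - \<tau>)) *\<^sub>R (x' - x)
      in (x', xf', y'))"

fun apapc ::
  "('a::real_vector \<Rightarrow> 'a) \<Rightarrow> ('a \<Rightarrow> 'a) \<Rightarrow> real \<Rightarrow> real \<Rightarrow> real \<Rightarrow> real \<Rightarrow> 'a \<Rightarrow> 'a \<Rightarrow> nat \<Rightarrow> 'a \<times> 'a \<times> 'a" where
  "apapc G W \<eta> \<theta> \<alpha> \<tau> x0 y0 0 = (x0, x0, y0)"
| "apapc G W \<eta> \<theta> \<alpha> \<tau> x0 y0 (Suc k) = apapc_step G W \<eta> \<theta> \<alpha> \<tau> (apapc G W \<eta> \<theta> \<alpha> \<tau> x0 y0 k)"

definition apapc_x where "apapc_x G W \<eta> \<theta> \<alpha> \<tau> x0 y0 k = fst (apapc G W \<eta> \<theta> \<alpha> \<tau> x0 y0 k)"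
definition apapc_xf where "apapc_xf G W \<eta> \<theta> \<alpha> \<tau> x0 y0 k = fst (snd (apapc G W \<eta> \<theta> \<alpha> \<tau> x0 y0 k))"
definition apapc_y where "apapc_y G W \<eta> \<theta> \<alpha> \<tau> x0 y0 k = snd (snd (apapc G W \<eta> \<theta> \<alpha> \<tau> x0 y0 k))"
definition apapc_xg where "apapc_xg G W \<eta> \<theta> \<alpha> \<tau> x0 y0 k =
   \<tau> *\<^sub>R apapc_x G W \<eta> \<theta> \<alpha> \<tau> x0 y0 k + (1 - \<tau>) *\<^sub>R apapc_xf G W \<eta> \<theta> \<alpha> \<tau> x0 y0 k"

end

theory Submission
  imports Defs
begin

text \<open>Write \<open>h = F - \<alpha>/2 \<parallel>\<cdot>\<parallel>\<^sup>2\<close>, which is convex for \<open>\<alpha> \<le> \<mu>\<close> and whose gradient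
  \<open>\<nabla>h = G - \<alpha> id\<close> is again \<open>L\<close>-Lipschitz. The \<open>x\<close>-update of APAPC solves for
  \<open>y\<^sup>k\<^sup>+\<^sup>1 - y\<^sup>* = -(x\<^sup>k\<^sup>+\<^sup>1 - x\<^sup>k)/\<eta> - (\<nabla>h(x\<^sub>g\<^sup>k) - \<nabla>h(x\<^sup>*)) - \<alpha>(x\<^sup>k\<^sup>+\<^sup>1 - x\<^sup>*)\<close>, so
  \<open>\<parallel>p+q+r\<parallel>\<^sup>2 \<le> 2\<parallel>p\<parallel>\<^sup>2 + 4\<parallel>q\<parallel>\<^sup>2 + 4\<parallel>r\<parallel>\<^sup>2\<close> together with the cocoercivity bound
  \<open>\<parallel>\<nabla>h(u) - \<nabla>h(v)\<parallel>\<^sup>2 \<le> 2L D\<^sub>h(u,v) \<le> 2L D\<^sub>F(u,v)\<close> gives the estimate after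
  multiplying by \<open>\<eta>/4\<close>. Nothing about \<open>W\<close> or the optimality of \<open>x\<^sup>*\<close> is needed.\<close>

lemma power2_norm_add3_le:
  fixes p q r :: "'a::real_normed_vector"
  shows "(norm (p + q + r))\<^sup>2 \<le> 2 * (norm p)\<^sup>2 + 4 * (norm q)\<^sup>2 + 4 * (norm r)\<^sup>2"
proof -
  have "norm (p + q + r) \<le> norm p + norm q + norm r"
    by (metis add_mono norm_triangle_ineq order_trans order_refl)
  then have "(norm (p + q + r))\<^sup>2 \<le> (norm p + norm q + norm r)\<^sup>2"
    by (simp add: power_mono)
  also have "\<dots> = 2 * (norm p)\<^sup>2 + 4 * (norm q)\<^sup>2 + 4 * (norm r)\<^sup>2
                    - (norm p - norm q - norm r)\<^sup>2 - 2 * (norm q - norm r)\<^sup>2"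
    by (simp add: power2_eq_square algebra_simps)
  also have "\<dots> \<le> 2 * (norm p)\<^sup>2 + 4 * (norm q)\<^sup>2 + 4 * (norm r)\<^sup>2"
    using zero_le_power2[of "norm p - norm q - norm r"] zero_le_power2[of "norm q - norm r"]
    by linarith
  finally show ?thesis .
qed

lemma convex_on_imp_above_tangent_plane:
  fixes \<phi> :: "'a::real_inner \<Rightarrow> real"
  assumes cvx: "convex_on UNIV \<phi>"
    and deriv: "(\<phi> has_derivative (\<lambda>h. g \<bullet> h)) (at x)"
  shows "\<phi> x + g \<bullet> (y - x) \<le> \<phi> y"
proof -
  define f where "f t = \<phi> (x + t *\<^sub>R (y - x))" for t :: real
  have "convex_on UNIV f"
  proof (rule convex_onI)
    fix t s u :: real
    have "x + ((1 - t) * s + t * u) *\<^sub>R (y - x)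
        = (1 - t) *\<^sub>R (x + s *\<^sub>R (y - x)) + t *\<^sub>R (x + u *\<^sub>R (y - x))"
      by (simp add: algebra_simps)
    moreover assume "0 < t" "t < 1"
    ultimately show "f ((1 - t) *\<^sub>R s + t *\<^sub>R u) \<le> (1 - t) * f s + t * f u"
      unfolding f_def using convex_onD[OF cvx, of t] by simp
  qed simp
  moreover have "(f has_field_derivative g \<bullet> (y - x)) (at 0)"
  proof -
    have "((\<lambda>t. x + t *\<^sub>R (y - x)) has_derivative (\<lambda>t. t *\<^sub>R (y - x))) (at 0)"
      by (auto intro!: derivative_eq_intros)
    from has_derivative_compose[OF this, of \<phi> "\<lambda>h. g \<bullet> h"] deriv
    have "(f has_derivative (\<lambda>t. t * (g \<bullet> (y - x)))) (at 0)"
      unfolding f_def by simp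
    moreover have "(\<lambda>t. t * (g \<bullet> (y - x))) = (*) (g \<bullet> (y - x))"
      by (simp add: fun_eq_iff)
    ultimately show ?thesis
      by (simp add: has_field_derivative_def)
  qed
  ultimately have "g \<bullet> (y - x) \<le> f 1 - f 0"
    using convex_on_imp_above_tangent[of UNIV f 0 1] by simp
  then show ?thesis
    unfolding f_def by simp
qed

lemma convex_on_gradient_monotone:
  fixes \<phi> :: "'a::real_inner \<Rightarrow> real"
  assumes "convex_on UNIV \<phi>"
    and "\<And>z. (\<phi> has_derivative (\<lambda>h. G z \<bullet> h)) (at z)"
  shows "0 \<le> (G u - G v) \<bullet> (u - v)"
  using convex_on_imp_above_tangent_plane[OF assms, of u v]
    convex_on_imp_above_tangent_plane[OF assms, of v u]
  by (simp add: inner_diff_left inner_diff_right)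

lemma lipschitz_gradient_upper_bound:
  fixes \<phi> :: "'a::real_inner \<Rightarrow> real"
  assumes deriv: "\<And>z. (\<phi> has_derivative (\<lambda>h. G z \<bullet> h)) (at z)"
    and lip: "\<And>u v. norm (G u - G v) \<le> L * norm (u - v)"
  shows "\<phi> y \<le> \<phi> x + G x \<bullet> (y - x) + L / 2 * (norm (y - x))\<^sup>2"
proof -
  define e where "e = y - x"
  define f where "f t = \<phi> (x + t *\<^sub>R e) - t * (G x \<bullet> e) - L / 2 * t\<^sup>2 * (norm e)\<^sup>2" for t :: real
  have "f 1 \<le> f 0"
  proof (rule DERIV_nonpos_imp_nonincreasing[of 0 1 f])
    fix t :: real
    assume t: "0 \<le> t" "t \<le> 1"
    have "((\<lambda>t. x + t *\<^sub>R e) has_derivative (\<lambda>s. s *\<^sub>R e)) (at t)"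
      by (auto intro!: derivative_eq_intros)
    from has_derivative_compose[OF this, of \<phi> "\<lambda>h. G (x + t *\<^sub>R e) \<bullet> h"] deriv
    have along: "((\<lambda>t. \<phi> (x + t *\<^sub>R e)) has_derivative (\<lambda>s. s * (G (x + t *\<^sub>R e) \<bullet> e))) (at t)"
      by simp
    have "(f has_derivative
        (\<lambda>s. s * (G (x + t *\<^sub>R e) \<bullet> e) - s * (G x \<bullet> e) - s * (L * t * (norm e)\<^sup>2))) (at t)"
      unfolding f_def
      by (rule derivative_eq_intros along | simp)+ (auto simp: algebra_simps power2_eq_square)
    moreover have "(\<lambda>s. s * (G (x + t *\<^sub>R e) \<bullet> e) - s * (G x \<bullet> e) - s * (L * t * (norm e)\<^sup>2))
        = (*) ((G (x + t *\<^sub>R e) - G x) \<bullet> e - L * t * (norm e)\<^sup>2)"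
      by (auto simp: fun_eq_iff algebra_simps inner_diff_left)
    ultimately have "DERIV f t :> (G (x + t *\<^sub>R e) - G x) \<bullet> e - L * t * (norm e)\<^sup>2"
      by (simp add: has_field_derivative_def)
    moreover have "(G (x + t *\<^sub>R e) - G x) \<bullet> e \<le> L * t * (norm e)\<^sup>2"
    proof -
      have "(G (x + t *\<^sub>R e) - G x) \<bullet> e \<le> norm (G (x + t *\<^sub>R e) - G x) * norm e"
        by (rule norm_cauchy_schwarz)
      also have "\<dots> \<le> (L * (t * norm e)) * norm e"
        using lip[of "x + t *\<^sub>R e" x] t by (intro mult_right_mono) auto
      finally show ?thesis
        by (simp add: power2_eq_square algebra_simps)
    qed
    ultimately show "\<exists>y. DERIV f t :> y \<and> y \<le> 0"
      by auto
  qed simp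
  then show ?thesis
    unfolding f_def e_def by simp
qed

text \<open>Minimising the upper bound from the point \<open>u\<close> lands at \<open>w = u - (G u - G v)/L\<close>;
  comparing \<open>\<phi> w\<close> with the tangent plane at \<open>v\<close> gives the bound.\<close>

lemma convex_lipschitz_gradient_cocoercive:
  fixes \<phi> :: "'a::real_inner \<Rightarrow> real"
  assumes cvx: "convex_on UNIV \<phi>"
    and deriv: "\<And>z. (\<phi> has_derivative (\<lambda>h. G z \<bullet> h)) (at z)"
    and lip: "\<And>u v. norm (G u - G v) \<le> L * norm (u - v)"
    and L: "0 < L"
  shows "(norm (G u - G v))\<^sup>2 \<le> 2 * L * bregman \<phi> G u v"
proof -
  define g where "g = G u - G v"
  define w where "w = u - (1 / L) *\<^sub>R g"
  have upper: "\<phi> w \<le> \<phi> u + G u \<bullet> (w - u) + L / 2 * (norm (w - u))\<^sup>2"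
    by (rule lipschitz_gradient_upper_bound[OF deriv lip])
  have lower: "\<phi> v + G v \<bullet> (w - v) \<le> \<phi> w"
    by (rule convex_on_imp_above_tangent_plane[OF cvx deriv])
  have "G u \<bullet> (w - u) - G v \<bullet> (w - v) + L / 2 * (norm (w - u))\<^sup>2
      = - (norm g)\<^sup>2 / (2 * L) - G v \<bullet> (u - v)"
    using L unfolding w_def g_def power2_norm_eq_inner
    by (simp add: inner_diff_right inner_diff_left power2_eq_square algebra_simps field_simps)
  then have "(norm g)\<^sup>2 / (2 * L) \<le> \<phi> u - \<phi> v - G v \<bullet> (u - v)"
    using upper lower by linarith
  then show ?thesis
    using L unfolding g_def bregman_def by (simp add: field_simps)
qed

lemma convex_on_power2_norm: "convex_on UNIV (\<lambda>x::'a::real_inner. (norm x)\<^sup>2)"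
proof (rule convex_onI)
  fix t :: real and x y :: 'a
  have "(1 - t) * (norm x)\<^sup>2 + t * (norm y)\<^sup>2 - (norm ((1 - t) *\<^sub>R x + t *\<^sub>R y))\<^sup>2
      = t * (1 - t) * (norm (x - y))\<^sup>2"
    unfolding power2_norm_eq_inner
    by (simp add: inner_add_left inner_add_right inner_diff_left inner_diff_right
        inner_commute algebra_simps)
  moreover assume "0 < t" "t < 1"
  ultimately show "(norm ((1 - t) *\<^sub>R x + t *\<^sub>R y))\<^sup>2 \<le> (1 - t) * (norm x)\<^sup>2 + t * (norm y)\<^sup>2"
    by (smt (verit) mult_nonneg_nonneg zero_le_power2)
qed simp

lemma strongly_convex_mono:
  assumes "strongly_convex \<mu> F" and "\<alpha> \<le> \<mu>"
  shows "strongly_convex \<alpha> F"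
proof -
  have "convex_on UNIV (\<lambda>x. (F x - \<mu> / 2 * (norm x)\<^sup>2) + (\<mu> - \<alpha>) / 2 * (norm x)\<^sup>2)"
    using assms convex_on_power2_norm unfolding strongly_convex_def
    by (intro convex_on_add convex_on_cmul) auto
  then show ?thesis
    unfolding strongly_convex_def by (simp add: algebra_simps diff_divide_distrib)
qed

lemma has_derivative_diff_half_power2_norm:
  fixes F :: "'a::real_inner \<Rightarrow> real"
  assumes "(F has_derivative (\<lambda>h. G x \<bullet> h)) (at x)"
  shows "((\<lambda>x. F x - \<alpha> / 2 * (norm x)\<^sup>2) has_derivative (\<lambda>h. (G x - \<alpha> *\<^sub>R x) \<bullet> h)) (at x)"
proof -
  have "((\<lambda>x. F x - \<alpha> / 2 * (norm x)\<^sup>2) has_derivative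
      (\<lambda>h. G x \<bullet> h - \<alpha> / 2 * (h \<bullet> x + x \<bullet> h))) (at x)"
    unfolding power2_norm_eq_inner by (auto intro!: derivative_eq_intros assms)
  moreover have "(\<lambda>h. G x \<bullet> h - \<alpha> / 2 * (h \<bullet> x + x \<bullet> h)) = (\<lambda>h. (G x - \<alpha> *\<^sub>R x) \<bullet> h)"
    by (auto simp: fun_eq_iff inner_diff_left inner_commute algebra_simps)
  ultimately show ?thesis
    by simp
qed

lemma strongly_convex_shifted_gradient_lipschitz:
  fixes F :: "'a::real_inner \<Rightarrow> real"
  assumes grad: "\<And>x. (F has_derivative (\<lambda>h. G x \<bullet> h)) (at x)"
    and sc: "strongly_convex \<alpha> F" and sm: "smooth L G" and \<alpha>: "0 \<le> \<alpha>"
  shows "norm ((G u - \<alpha> *\<^sub>R u) - (G v - \<alpha> *\<^sub>R v)) \<le> L * norm (u - v)"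
proof -
  define q where "q = G u - G v"
  define d where "d = u - v"
  have "0 \<le> ((G u - \<alpha> *\<^sub>R u) - (G v - \<alpha> *\<^sub>R v)) \<bullet> (u - v)"
    using sc has_derivative_diff_half_power2_norm[OF grad]
    unfolding strongly_convex_def by (rule convex_on_gradient_monotone)
  then have "\<alpha> * (norm d)\<^sup>2 \<le> q \<bullet> d"
    unfolding q_def d_def power2_norm_eq_inner by (simp add: algebra_simps inner_diff_left)
  then have "\<alpha>\<^sup>2 * (norm d)\<^sup>2 \<le> \<alpha> * (q \<bullet> d)"
    using \<alpha> mult_left_mono by (fastforce simp: power2_eq_square mult.assoc)
  moreover have lip: "norm q \<le> L * norm d"
    using sm unfolding smooth_def q_def d_def by blast
  then have "(norm q)\<^sup>2 \<le> (L * norm d)\<^sup>2"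
    by (simp add: power_mono)
  moreover have "(norm (q - \<alpha> *\<^sub>R d))\<^sup>2 = (norm q)\<^sup>2 - 2 * (\<alpha> * (q \<bullet> d)) + \<alpha>\<^sup>2 * (norm d)\<^sup>2"
    unfolding power2_norm_eq_inner
    by (simp add: inner_diff_left inner_diff_right inner_commute algebra_simps power2_eq_square)
  moreover have "0 \<le> \<alpha>\<^sup>2 * (norm d)\<^sup>2"
    by simp
  ultimately have "(norm (q - \<alpha> *\<^sub>R d))\<^sup>2 \<le> (L * norm d)\<^sup>2"
    by linarith
  moreover have "0 \<le> L * norm d"
    using lip norm_ge_zero order_trans by blast
  ultimately have "norm (q - \<alpha> *\<^sub>R d) \<le> L * norm d"
    by (rule power2_le_imp_le)
  then show ?thesis
    unfolding q_def d_def by (simp add: algebra_simps)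
qed

lemma strongly_convex_shifted_gradient_cocoercive:
  fixes F :: "'a::real_inner \<Rightarrow> real"
  assumes grad: "\<And>x. (F has_derivative (\<lambda>h. G x \<bullet> h)) (at x)"
    and sc: "strongly_convex \<alpha> F" and sm: "smooth L G" and \<alpha>: "0 \<le> \<alpha>" and L: "0 < L"
  shows "(norm ((G u - \<alpha> *\<^sub>R u) - (G v - \<alpha> *\<^sub>R v)))\<^sup>2 \<le> 2 * L * bregman F G u v"
proof -
  define h where "h x = F x - \<alpha> / 2 * (norm x)\<^sup>2" for x
  have "(norm ((G u - \<alpha> *\<^sub>R u) - (G v - \<alpha> *\<^sub>R v)))\<^sup>2
      \<le> 2 * L * bregman h (\<lambda>x. G x - \<alpha> *\<^sub>R x) u v"
    using sc has_derivative_diff_half_power2_norm[OF grad]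
      strongly_convex_shifted_gradient_lipschitz[OF grad sc sm \<alpha>] L
    unfolding strongly_convex_def h_def by (rule convex_lipschitz_gradient_cocoercive)
  also have "bregman h (\<lambda>x. G x - \<alpha> *\<^sub>R x) u v = bregman F G u v - \<alpha> / 2 * (norm (u - v))\<^sup>2"
    unfolding h_def bregman_def power2_norm_eq_inner
    by (simp add: inner_diff_left inner_diff_right inner_commute algebra_simps)
  also have "2 * L * \<dots> \<le> 2 * L * bregman F G u v"
    using \<alpha> L by (simp add: mult_left_mono)
  finally show ?thesis .
qed

lemma apapc_x_Suc:
  "apapc_x G W \<eta> \<theta> \<alpha> \<tau> x0 y0 (Suc k) = inverse (1 + \<eta> * \<alpha>) *\<^sub>R
     (apapc_x G W \<eta> \<theta> \<alpha> \<tau> x0 y0 k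
      - \<eta> *\<^sub>R (G (apapc_xg G W \<eta> \<theta> \<alpha> \<tau> x0 y0 k) - \<alpha> *\<^sub>R apapc_xg G W \<eta> \<theta> \<alpha> \<tau> x0 y0 k
               + apapc_y G W \<eta> \<theta> \<alpha> \<tau> x0 y0 (Suc k)))"
  unfolding apapc_x_def apapc_y_def apapc_xg_def apapc_xf_def apapc.simps(2)
  by (cases "apapc G W \<eta> \<theta> \<alpha> \<tau> x0 y0 k") (simp only: apapc_step_def Let_def prod.sel prod.case)

lemma apapc_x_update_residual:
  fixes G :: "'a::real_vector \<Rightarrow> 'a"
  assumes update: "x' = inverse (1 + \<eta> * \<alpha>) *\<^sub>R (x - \<eta> *\<^sub>R (G xg - \<alpha> *\<^sub>R xg + y'))"
    and "\<eta> \<noteq> 0" and "1 + \<eta> * \<alpha> \<noteq> 0"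
  shows "y' + G z = - ((1 / \<eta>) *\<^sub>R (x' - x)
           + ((G xg - \<alpha> *\<^sub>R xg) - (G z - \<alpha> *\<^sub>R z)) + \<alpha> *\<^sub>R (x' - z))"
proof -
  have "x = (1 + \<eta> * \<alpha>) *\<^sub>R x' + \<eta> *\<^sub>R (G xg - \<alpha> *\<^sub>R xg + y')"
    using update assms(3) by simp
  then have "\<eta> *\<^sub>R (y' + G z) = \<eta> *\<^sub>R (- ((1 / \<eta>) *\<^sub>R (x' - x)
           + ((G xg - \<alpha> *\<^sub>R xg) - (G z - \<alpha> *\<^sub>R z)) + \<alpha> *\<^sub>R (x' - z)))"
    using assms(2) by (simp add: algebra_simps)
  then show ?thesis
    using assms(2) by simp
qed

theorem mainTheorem6:
  fixes F :: "real^'d^'n \<Rightarrow> real"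
    and G :: "real^'d^'n \<Rightarrow> real^'d^'n"
    and W :: "real^'d^'n \<Rightarrow> real^'d^'n"
    and x0 y0 xstar :: "real^'d^'n"
    and \<mu> L \<eta> \<theta> \<tau> \<alpha> :: real
    and k :: nat
  assumes grad: "\<And>x. (F has_derivative (\<lambda>h. G x \<bullet> h)) (at x)"
    and mu_pos: "0 < \<mu>" and mu_le_L: "\<mu> \<le> L"
    and sc: "strongly_convex \<mu> F"
    and sm: "smooth L G"
    and W_lin: "linear W"
    and W_sym: "\<And>u v. W u \<bullet> v = u \<bullet> W v"
    and W_psd: "\<And>u. 0 \<le> u \<bullet> W u"
    and W_ker: "{u. W u = 0} = consensus"
    and xstar_in: "W xstar = 0"
    and xstar_min: "\<And>x. W x = 0 \<Longrightarrow> F xstar \<le> F x"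
    and y0_range: "y0 \<in> range W"
    and eta_pos: "0 < \<eta>" and theta_pos: "0 < \<theta>"
    and tau_pos: "0 < \<tau>" and tau_le: "\<tau> \<le> 1"
    and alpha_pos: "0 < \<alpha>" and alpha_le: "\<alpha> \<le> \<mu>"
  shows "- 1 / (2 * \<eta>) * (norm (apapc_x G W \<eta> \<theta> \<alpha> \<tau> x0 y0 (Suc k) - apapc_x G W \<eta> \<theta> \<alpha> \<tau> x0 y0 k))^2
     \<le> - \<eta> / 4 * (norm (apapc_y G W \<eta> \<theta> \<alpha> \<tau> x0 y0 (Suc k) - (- G xstar)))^2
       + \<eta> * \<alpha>^2 * (norm (apapc_x G W \<eta> \<theta> \<alpha> \<tau> x0 y0 (Suc k) - xstar))^2
       + 2 * \<eta> * L * bregman F G (apapc_xg G W \<eta> \<theta> \<alpha> \<tau> x0 y0 k) xstar"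
proof -
  define x where "x = apapc_x G W \<eta> \<theta> \<alpha> \<tau> x0 y0"
  define xg where "xg = apapc_xg G W \<eta> \<theta> \<alpha> \<tau> x0 y0 k"
  define y' where "y' = apapc_y G W \<eta> \<theta> \<alpha> \<tau> x0 y0 (Suc k)"
  define \<Delta> where "\<Delta> = norm (x (Suc k) - x k)"
  define b where "b = (G xg - \<alpha> *\<^sub>R xg) - (G xstar - \<alpha> *\<^sub>R xstar)"
  define D where "D = bregman F G xg xstar"
  define E where "E = norm (x (Suc k) - xstar)"
  have "0 < 1 + \<eta> * \<alpha>"
    using eta_pos alpha_pos by (simp add: add_pos_pos)
  then have "y' + G xstar = - ((1 / \<eta>) *\<^sub>R (x (Suc k) - x k) + b + \<alpha> *\<^sub>R (x (Suc k) - xstar))"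
    using eta_pos unfolding x_def xg_def y'_def b_def
    by (intro apapc_x_update_residual[where G = G] apapc_x_Suc) auto
  then have "(norm (y' + G xstar))\<^sup>2
      \<le> 2 * (norm ((1 / \<eta>) *\<^sub>R (x (Suc k) - x k)))\<^sup>2 + 4 * (norm b)\<^sup>2
         + 4 * (norm (\<alpha> *\<^sub>R (x (Suc k) - xstar)))\<^sup>2"
    by (simp only: norm_minus_cancel power2_norm_add3_le)
  also have "\<dots> = 2 / \<eta>\<^sup>2 * \<Delta>\<^sup>2 + 4 * (norm b)\<^sup>2 + 4 * \<alpha>\<^sup>2 * E\<^sup>2"
    using eta_pos alpha_pos unfolding \<Delta>_def E_def by (simp add: power_mult_distrib power_divide)
  also have "\<dots> \<le> 2 / \<eta>\<^sup>2 * \<Delta>\<^sup>2 + 8 * L * D + 4 * \<alpha>\<^sup>2 * E\<^sup>2"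
    using strongly_convex_shifted_gradient_cocoercive[OF grad strongly_convex_mono[OF sc alpha_le] sm,
        of xg xstar] alpha_pos mu_pos mu_le_L
    unfolding b_def D_def by simp
  finally have "\<eta> / 4 * (norm (y' + G xstar))\<^sup>2
      \<le> \<eta> / 4 * (2 / \<eta>\<^sup>2 * \<Delta>\<^sup>2 + 8 * L * D + 4 * \<alpha>\<^sup>2 * E\<^sup>2)"
    using eta_pos by (simp add: mult_left_mono)
  also have "\<dots> = 1 / (2 * \<eta>) * \<Delta>\<^sup>2 + 2 * \<eta> * L * D + \<eta> * \<alpha>\<^sup>2 * E\<^sup>2"
    using eta_pos by (simp add: field_simps power2_eq_square)
  finally show ?thesis
    unfolding x_def xg_def y'_def \<Delta>_def D_def E_def by simp
qed

end
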